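(* Suppose $T$ has the f.s. dichotomy, and let $\bar a,\bar b$ be finite tuples, $c$ a singleton, and $M\preceq\mathbb{C}$ a small model. (1) If $\mathrm{tp}(\bar a/Mc)$ and $\mathrm{tp}(c/M\bar b)$ are both not finitely satisfied in $M$, then $\mathrm{tp}(\bar a/M\bar b)$ is not finitely satisfied in $M$. (2) $\mathrm{tp}(\bar a/M\bar b)$ is finitely satisfied in $M$ iff $\mathrm{tp}(a/M\bar b)$ is finitely satisfied in $M$ for every element $a$ of $\bar a$. (3) If $C\supseteq M$ is full, then $\mathrm{tp}(\bar a/C\bar b)$ is finitely satisfied in $M$ iff $\mathrm{tp}(a/Cb)$ is finitely satisfied in $M$ for every element $a$ of $\bar a$ and every element $b$ of $\bar b$.
   Context: Work in a monster model $\mathbb{C}$ of $T$. For $B\supseteq M$, $\mathrm{tp}(A/B)$ is finitely satisfied in $M$ if each of its formulas is satisfied by a tuple from $M$. $T$ has the f.s. dichotomy if for every small model $M$ and finite tuples $\bar a,\bar b$ with $\mathrm{tp}(\bar b/M\bar a)$ finitely satisfied in $M$, for every singleton $c$ either $\mathrm{tp}(\bar b/M\bar ac)$ or $\mathrm{tp}(\bar bc/M\bar a)$ is finitely satisfied in $M$. A set $C\supseteq M$ is full if every type in $S_n(M)$, for every $n$, is realized in $C$. *)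

theory Defs
  imports Main "HOL-Library.Equipollence"
begin

datatype 'f trm = Var nat | Fn 'f "'f trm list"

datatype ('f, 'r) fml =
    FTrue
  | Eq "'f trm" "'f trm"
  | Rel 'r "'f trm list"
  | Neg "('f, 'r) fml"
  | Conj "('f, 'r) fml" "('f, 'r) fml"
  | Ex nat "('f, 'r) fml"

fun fv_trm :: "'f trm \<Rightarrow> nat set" where
  "fv_trm (Var i) = {i}"
| "fv_trm (Fn f ts) = (\<Union>t\<in>set ts. fv_trm t)"

fun fv :: "('f, 'r) fml \<Rightarrow> nat set" where
  "fv FTrue = {}"
| "fv (Eq s t) = fv_trm s \<union> fv_trm t"
| "fv (Rel r ts) = (\<Union>t\<in>set ts. fv_trm t)"
| "fv (Neg \<phi>) = fv \<phi>"
| "fv (Conj \<phi> \<psi>) = fv \<phi> \<union> fv \<psi>"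
| "fv (Ex x \<phi>) = fv \<phi> - {x}"

record ('a, 'f, 'r) struc =
  univ :: "'a set"
  funs :: "'f \<Rightarrow> 'a list \<Rightarrow> 'a"
  rels :: "'r \<Rightarrow> 'a list \<Rightarrow> bool"

fun eval :: "('a, 'f, 'r) struc \<Rightarrow> (nat \<Rightarrow> 'a) \<Rightarrow> 'f trm \<Rightarrow> 'a" where
  "eval S e (Var i) = e i"
| "eval S e (Fn f ts) = funs S f (map (eval S e) ts)"

fun sat :: "('a, 'f, 'r) struc \<Rightarrow> (nat \<Rightarrow> 'a) \<Rightarrow> ('f, 'r) fml \<Rightarrow> bool" where
  "sat S e FTrue = True"
| "sat S e (Eq s t) = (eval S e s = eval S e t)"
| "sat S e (Rel r ts) = rels S r (map (eval S e) ts)"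
| "sat S e (Neg \<phi>) = (\<not> sat S e \<phi>)"
| "sat S e (Conj \<phi> \<psi>) = (sat S e \<phi> \<and> sat S e \<psi>)"
| "sat S e (Ex x \<phi>) = (\<exists>a\<in>univ S. sat S (e(x := a)) \<phi>)"

definition is_structure :: "('a, 'f, 'r) struc \<Rightarrow> bool" where
  "is_structure S \<longleftrightarrow> univ S \<noteq> {} \<and>
     (\<forall>f xs. set xs \<subseteq> univ S \<longrightarrow> funs S f xs \<in> univ S)"

definition lenv :: "'a list \<Rightarrow> nat \<Rightarrow> 'a" where
  "lenv xs i = (if i < length xs then xs ! i else undefined)"

text \<open>An L(B)-formula in the variables x_0..x_(n-1) is a pair (phi, ps) where ps is a finite
  list of parameters from B substituted for the variables x_n, x_(n+1), ...\<close>
definition lformulas :: "nat \<Rightarrow> 'a set \<Rightarrow> (('f, 'r) fml \<times> 'a list) set" where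
  "lformulas n B = {(\<phi>, ps). set ps \<subseteq> B \<and> fv \<phi> \<subseteq> {..<n + length ps}}"

definition tp :: "('a, 'f, 'r) struc \<Rightarrow> 'a list \<Rightarrow> 'a set \<Rightarrow> (('f, 'r) fml \<times> 'a list) set" where
  "tp C xs B = {(\<phi>, ps) \<in> lformulas (length xs) B. sat C (lenv (xs @ ps)) \<phi>}"

definition realizes :: "('a, 'f, 'r) struc \<Rightarrow> 'a list \<Rightarrow> (('f, 'r) fml \<times> 'a list) set \<Rightarrow> bool" where
  "realizes C ys p \<longleftrightarrow> (\<forall>(\<phi>, ps)\<in>p. sat C (lenv (ys @ ps)) \<phi>)"

definition fin_sat :: "('a, 'f, 'r) struc \<Rightarrow> 'a set \<Rightarrow> 'a list \<Rightarrow> 'a set \<Rightarrow> bool" where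
  "fin_sat C M xs B \<longleftrightarrow>
     (\<forall>(\<phi>, ps)\<in>tp C xs B. \<exists>ys. length ys = length xs \<and> set ys \<subseteq> M \<and> sat C (lenv (ys @ ps)) \<phi>)"

definition elem_sub :: "('a, 'f, 'r) struc \<Rightarrow> 'a set \<Rightarrow> bool" where
  "elem_sub C M \<longleftrightarrow> M \<noteq> {} \<and> M \<subseteq> univ C \<and>
     (\<forall>f xs. set xs \<subseteq> M \<longrightarrow> funs C f xs \<in> M) \<and>
     (\<forall>\<phi> e. range e \<subseteq> M \<longrightarrow> (sat (C\<lparr>univ := M\<rparr>) e \<phi> \<longleftrightarrow> sat C e \<phi>))"

text \<open>Smallness relative to the saturation cardinal, represented by a set K: |A| < |K|.\<close>
definition small :: "'k set \<Rightarrow> 'a set \<Rightarrow> bool" where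
  "small K A \<longleftrightarrow> \<not> (K \<lesssim> A)"

text \<open>p is a partial n-type over A finitely satisfiable in C (i.e. consistent with Th(C_A)).\<close>
definition fs_partial_type :: "('a, 'f, 'r) struc \<Rightarrow> nat \<Rightarrow> 'a set \<Rightarrow> (('f, 'r) fml \<times> 'a list) set \<Rightarrow> bool" where
  "fs_partial_type C n A p \<longleftrightarrow> p \<subseteq> lformulas n A \<and>
     (\<forall>q\<subseteq>p. finite q \<longrightarrow> (\<exists>ys. length ys = n \<and> set ys \<subseteq> univ C \<and> realizes C ys q))"

definition partial_elementary :: "('a, 'f, 'r) struc \<Rightarrow> 'a set \<Rightarrow> ('a \<Rightarrow> 'a) \<Rightarrow> bool" where
  "partial_elementary C A g \<longleftrightarrow> A \<subseteq> univ C \<and> g ` A \<subseteq> univ C \<and>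
     (\<forall>\<phi> xs. set xs \<subseteq> A \<longrightarrow> fv \<phi> \<subseteq> {..<length xs} \<longrightarrow>
        (sat C (lenv xs) \<phi> \<longleftrightarrow> sat C (lenv (map g xs)) \<phi>))"

definition automorphism :: "('a, 'f, 'r) struc \<Rightarrow> ('a \<Rightarrow> 'a) \<Rightarrow> bool" where
  "automorphism C g \<longleftrightarrow> bij_betw g (univ C) (univ C) \<and>
     (\<forall>f xs. set xs \<subseteq> univ C \<longrightarrow> g (funs C f xs) = funs C f (map g xs)) \<and>
     (\<forall>r xs. set xs \<subseteq> univ C \<longrightarrow> (rels C r xs \<longleftrightarrow> rels C r (map g xs)))"

text \<open>C is a monster model with respect to the (large, infinite) cardinal |K| > |L|:
  |K|-saturated and strongly |K|-homogeneous.\<close>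
definition monster :: "('a, 'f, 'r) struc \<Rightarrow> 'k set \<Rightarrow> bool" where
  "monster C K \<longleftrightarrow> is_structure C \<and> infinite K \<and> small K (UNIV :: ('f, 'r) fml set) \<and>
     (\<forall>A n p. A \<subseteq> univ C \<longrightarrow> small K A \<longrightarrow> fs_partial_type C n A p \<longrightarrow>
        (\<exists>ys. length ys = n \<and> set ys \<subseteq> univ C \<and> realizes C ys p)) \<and>
     (\<forall>A g. small K A \<longrightarrow> partial_elementary C A g \<longrightarrow>
        (\<exists>h. automorphism C h \<and> (\<forall>x\<in>A. h x = g x)))"

definition small_model :: "('a, 'f, 'r) struc \<Rightarrow> 'k set \<Rightarrow> 'a set \<Rightarrow> bool" where
  "small_model C K M \<longleftrightarrow> elem_sub C M \<and> small K M"

definition fs_dichotomy :: "('a, 'f, 'r) struc \<Rightarrow> 'k set \<Rightarrow> bool" where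
  "fs_dichotomy C K \<longleftrightarrow>
     (\<forall>M as bs. small_model C K M \<longrightarrow> set as \<subseteq> univ C \<longrightarrow> set bs \<subseteq> univ C \<longrightarrow>
        fin_sat C M bs (M \<union> set as) \<longrightarrow>
        (\<forall>c\<in>univ C. fin_sat C M bs (M \<union> set as \<union> {c}) \<or> fin_sat C M (bs @ [c]) (M \<union> set as)))"

text \<open>S_n(M): complete n-types over M consistent with Th(C_M).\<close>
definition Stypes :: "('a, 'f, 'r) struc \<Rightarrow> nat \<Rightarrow> 'a set \<Rightarrow> (('f, 'r) fml \<times> 'a list) set set" where
  "Stypes C n M = {p. fs_partial_type C n M p \<and>
     (\<forall>(\<phi>, ps)\<in>lformulas n M. (\<phi>, ps) \<in> p \<or> (Neg \<phi>, ps) \<in> p)}"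

definition full :: "('a, 'f, 'r) struc \<Rightarrow> 'a set \<Rightarrow> 'a set \<Rightarrow> bool" where
  "full C M D \<longleftrightarrow> M \<subseteq> D \<and> D \<subseteq> univ C \<and>
     (\<forall>n. \<forall>p\<in>Stypes C n M. \<exists>ys. length ys = n \<and> set ys \<subseteq> D \<and> realizes C ys p)"

end

theory Submission
  imports Defs
begin

(* (1) is one application of the dichotomy to as, bs and c: either tp(as/M bs c) is f.s.,
   hence so is tp(as/M c), or tp(as c/M bs) is, hence so is tp(c/M bs).
   (2) follows by induction on the tuple: the dichotomy either extends f.s. directly or
   reduces tp(xs a/B) to tp(xs/B a) and tp(a/B), and these compose.
   For (3), the key step is that for full D, if tp(xs/D B) and tp(xs/D b) are f.s. then so
   is tp(xs/D B b). Write a formula of tp(xs/D B b) as theta(xs, b, ps) with ps from D B,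
   and realize tp(ps/M) by some qs in D. By the dichotomy for xs over M ps qs and b, either
   theta is satisfied in M outright, or tp(xs b/M ps qs) is f.s.; then ps and qs cannot be
   told apart by formulas in xs b over M, so theta(xs, b, qs) holds; as a formula over D b
   it is satisfied by some ms from M, and moving back from qs to ps gives theta(ms, b, ps). *)

fun ren_trm :: "(nat \<Rightarrow> nat) \<Rightarrow> 'f trm \<Rightarrow> 'f trm" where
  "ren_trm r (Var i) = Var (r i)"
| "ren_trm r (Fn f ts) = Fn f (map (ren_trm r) ts)"

fun ren :: "(nat \<Rightarrow> nat) \<Rightarrow> ('f, 'r) fml \<Rightarrow> ('f, 'r) fml" where
  "ren r FTrue = FTrue"
| "ren r (Eq s t) = Eq (ren_trm r s) (ren_trm r t)"
| "ren r (Rel R ts) = Rel R (map (ren_trm r) ts)"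
| "ren r (Neg \<phi>) = Neg (ren r \<phi>)"
| "ren r (Conj \<phi> \<psi>) = Conj (ren r \<phi>) (ren r \<psi>)"
| "ren r (Ex x \<phi>) = Ex (r x) (ren r \<phi>)"

lemma eval_ren_trm: "eval S e (ren_trm r t) = eval S (e \<circ> r) t"
  by (induction t) (auto cong: map_cong)

lemma fv_trm_ren_trm: "fv_trm (ren_trm r t) = r ` fv_trm t"
  by (induction t) auto

lemma fv_ren: "inj r \<Longrightarrow> fv (ren r \<phi>) = r ` fv \<phi>"
  by (induction \<phi>) (auto simp: fv_trm_ren_trm inj_eq)

lemma sat_ren: "inj r \<Longrightarrow> sat S e (ren r \<phi>) = sat S (e \<circ> r) \<phi>"
proof (induction \<phi> arbitrary: e)
  case (Ex x \<phi>)
  have upd: "(e(r x := a)) \<circ> r = (e \<circ> r)(x := a)" for a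
    using Ex.prems by (auto simp: inj_eq)
  have "sat S e (ren r (Ex x \<phi>)) \<longleftrightarrow> (\<exists>a\<in>univ S. sat S ((e(r x := a)) \<circ> r) \<phi>)"
    by (simp only: ren.simps sat.simps Ex.IH[OF Ex.prems])
  then show ?case by (simp only: upd sat.simps)
qed (auto simp: eval_ren_trm comp_def)

lemma eval_cong: "\<forall>i\<in>fv_trm t. e i = e' i \<Longrightarrow> eval S e t = eval S e' t"
  by (induction t) (auto cong: map_cong)

lemma sat_cong: "\<forall>i\<in>fv \<phi>. e i = e' i \<Longrightarrow> sat S e \<phi> = sat S e' \<phi>"
proof (induction \<phi> arbitrary: e e')
  case (Eq s t)
  then show ?case using eval_cong[of s e e' S] eval_cong[of t e e' S] by simp
next
  case (Rel R ts)
  then have "map (eval S e) ts = map (eval S e') ts"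
    by (auto intro!: map_cong eval_cong)
  then show ?case by (simp only: sat.simps)
next
  case (Conj \<phi>1 \<phi>2)
  have "sat S e \<phi>1 = sat S e' \<phi>1" "sat S e \<phi>2 = sat S e' \<phi>2"
    using Conj.prems by (auto intro!: Conj.IH)
  then show ?case by simp
next
  case (Ex x \<phi>)
  then have "sat S (e(x := a)) \<phi> = sat S (e'(x := a)) \<phi>" for a
    by simp
  then show ?case by simp
qed auto

fun bind_vars :: "nat \<Rightarrow> nat list \<Rightarrow> ('f, 'r) fml \<Rightarrow> ('f, 'r) fml" where
  "bind_vars j [] \<phi> = \<phi>"
| "bind_vars j (i # I) \<phi> = Ex j (Conj (Eq (Var j) (Var i)) (bind_vars (Suc j) I \<phi>))"

lemma fv_bind_vars: "fv (bind_vars j I \<phi>) \<subseteq> (fv \<phi> - {j..<j + length I}) \<union> set I"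
proof (induction I arbitrary: j)
  case (Cons i I)
  then show ?case using Cons.IH[of "Suc j"] by auto
qed simp

lemma sat_bind_vars:
  assumes "\<forall>i\<in>set I. i < j \<and> e i \<in> univ S"
  shows "sat S e (bind_vars j I \<phi>) \<longleftrightarrow>
    sat S (\<lambda>v. if j \<le> v \<and> v < j + length I then e (I ! (v - j)) else e v) \<phi>"
  using assms
proof (induction I arbitrary: j e)
  case (Cons i I)
  let ?e = "e(j := e i)"
  have "sat S e (bind_vars j (i # I) \<phi>) \<longleftrightarrow> sat S ?e (bind_vars (Suc j) I \<phi>)"
    using Cons.prems by auto
  also have "\<dots> \<longleftrightarrow>
      sat S (\<lambda>v. if Suc j \<le> v \<and> v < Suc j + length I then ?e (I ! (v - Suc j)) else ?e v) \<phi>"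
    by (rule Cons.IH) (use Cons.prems in auto)
  also have "(\<lambda>v. if Suc j \<le> v \<and> v < Suc j + length I then ?e (I ! (v - Suc j)) else ?e v) =
      (\<lambda>v. if j \<le> v \<and> v < j + length (i # I) then e ((i # I) ! (v - j)) else e v)"
  proof
    fix v
    have "I ! k \<noteq> j" if "k < length I" for k
      using Cons.prems nth_mem[OF that] by auto
    then show "(if Suc j \<le> v \<and> v < Suc j + length I then ?e (I ! (v - Suc j)) else ?e v) =
        (if j \<le> v \<and> v < j + length (i # I) then e ((i # I) ! (v - j)) else e v)"
      by (auto simp: nth_Cons')
  qed
  finally show ?case .
next
  case Nil
  have "(\<lambda>v. if j \<le> v \<and> v < j + length [] then e ([] ! (v - j)) else e v) = e"
    by (rule ext) auto
  then show ?case by simp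
qed

(* Variables are rearranged by shifting those of phi above m and then binding the copy of
   variable i to variable I ! i with Ex v (v = w \<and> ...); these existentials range over
   the universe, which is why the lemmas below require all tuples to lie in it. *)
lemma definable_reindex:
  assumes "fv \<phi> \<subseteq> {..<length I}" and "set I \<subseteq> {..<m}"
  obtains \<psi> where "fv \<psi> \<subseteq> {..<m}"
    and "\<And>L L'. length L = m \<Longrightarrow> set L \<subseteq> univ S \<Longrightarrow> map ((!) L) I = L' \<Longrightarrow>
           sat S (lenv L) \<psi> \<longleftrightarrow> sat S (lenv L') \<phi>"
proof
  let ?\<psi> = "bind_vars m I (ren ((+) m) \<phi>)"
  show "fv ?\<psi> \<subseteq> {..<m}"
    using fv_bind_vars[of m I "ren ((+) m) \<phi>"] fv_ren[of "(+) m" \<phi>] assms by force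
  fix L L'
  assume L: "length L = m" "set L \<subseteq> univ S" and L': "map ((!) L) I = L'"
  define e where "e v = (if m \<le> v \<and> v < m + length I then lenv L (I ! (v - m)) else lenv L v)" for v
  have "sat S (lenv L) ?\<psi> \<longleftrightarrow> sat S e (ren ((+) m) \<phi>)"
    unfolding e_def by (rule sat_bind_vars) (use assms(2) L in \<open>auto simp: lenv_def\<close>)
  also have "\<dots> \<longleftrightarrow> sat S (e \<circ> (+) m) \<phi>"
    by (rule sat_ren) simp
  also have "\<dots> \<longleftrightarrow> sat S (lenv (map ((!) L) I)) \<phi>"
  proof (rule sat_cong, rule ballI)
    fix i
    assume "i \<in> fv \<phi>"
    then have "i < length I" using assms(1) by auto
    moreover from this have "I ! i < m" using assms(2) nth_mem by blast
    ultimately show "(e \<circ> (+) m) i = lenv (map ((!) L) I) i"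
      using L by (simp add: e_def lenv_def)
  qed
  finally show "sat S (lenv L) ?\<psi> \<longleftrightarrow> sat S (lenv L') \<phi>"
    by (simp only: L')
qed

lemma map_nth_block: "map ((!) (xs @ ys @ zs)) [length xs..<length xs + length ys] = ys"
  by (rule nth_equalityI) (auto simp: nth_append)

lemma mem_tp:
  "(\<phi>, ps) \<in> tp C xs B \<longleftrightarrow>
     set ps \<subseteq> B \<and> fv \<phi> \<subseteq> {..<length xs + length ps} \<and> sat C (lenv (xs @ ps)) \<phi>"
  by (auto simp: tp_def lformulas_def)

lemma fin_satI:
  assumes "\<And>\<phi> ps. set ps \<subseteq> B \<Longrightarrow> fv \<phi> \<subseteq> {..<length xs + length ps} \<Longrightarrow>
      sat C (lenv (xs @ ps)) \<phi> \<Longrightarrow>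
      \<exists>ys. length ys = length xs \<and> set ys \<subseteq> M \<and> sat C (lenv (ys @ ps)) \<phi>"
  shows "fin_sat C M xs B"
  using assms by (auto simp: fin_sat_def mem_tp)

lemma fin_satE:
  assumes "fin_sat C M xs B" and "set ps \<subseteq> B" and "fv \<phi> \<subseteq> {..<length xs + length ps}"
    and "sat C (lenv (xs @ ps)) \<phi>"
  obtains ys where "length ys = length xs" "set ys \<subseteq> M" "sat C (lenv (ys @ ps)) \<phi>"
proof -
  have "(\<phi>, ps) \<in> tp C xs B"
    using assms(2-4) by (simp add: mem_tp)
  then show ?thesis
    using assms(1) that unfolding fin_sat_def by blast
qed

lemma fin_sat_mono: "fin_sat C M xs B \<Longrightarrow> B' \<subseteq> B \<Longrightarrow> fin_sat C M xs B'"
  by (auto simp: fin_sat_def tp_def lformulas_def)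

lemma fin_sat_Nil: "fin_sat C M [] B"
  by (rule fin_satI) simp

lemma fin_sat_if_finite_params:
  assumes "\<And>ps. set ps \<subseteq> B \<Longrightarrow> fin_sat C M xs (set ps)"
  shows "fin_sat C M xs B"
proof (rule fin_satI)
  fix \<phi> ps
  assume "set ps \<subseteq> B" "fv \<phi> \<subseteq> {..<length xs + length ps}" "sat C (lenv (xs @ ps)) \<phi>"
  then show "\<exists>ys. length ys = length xs \<and> set ys \<subseteq> M \<and> sat C (lenv (ys @ ps)) \<phi>"
    using fin_satE[OF assms, of ps ps \<phi>] by blast
qed

lemma fin_sat_map_nth:
  assumes fs: "fin_sat C M xs B" and I: "set I \<subseteq> {..<length xs}"
    and univ: "set xs \<subseteq> univ C" "B \<subseteq> univ C" "M \<subseteq> univ C"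
  shows "fin_sat C M (map ((!) xs) I) B"
proof (rule fin_satI)
  fix \<phi> ps
  assume ps: "set ps \<subseteq> B" and fv: "fv \<phi> \<subseteq> {..<length (map ((!) xs) I) + length ps}"
    and sat: "sat C (lenv (map ((!) xs) I @ ps)) \<phi>"
  let ?n = "length xs"
  let ?J = "I @ [?n..<?n + length ps]"
  have picks: "map ((!) (zs @ ps)) ?J = map ((!) zs) I @ ps" if "length zs = ?n" for zs
    using that I map_nth_block[of zs ps "[]"] by (auto simp: nth_append)
  obtain \<psi> where fv\<psi>: "fv \<psi> \<subseteq> {..<?n + length ps}"
    and \<psi>: "\<And>L L'. length L = ?n + length ps \<Longrightarrow> set L \<subseteq> univ C \<Longrightarrow>
           map ((!) L) ?J = L' \<Longrightarrow> sat C (lenv L) \<psi> \<longleftrightarrow> sat C (lenv L') \<phi>"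
    by (rule definable_reindex[of \<phi> ?J "?n + length ps" C]) (use fv I in auto)
  have "sat C (lenv (xs @ ps)) \<psi>"
    using \<psi>[OF _ _ picks] sat ps univ by auto
  then obtain ys where ys: "length ys = ?n" "set ys \<subseteq> M" "sat C (lenv (ys @ ps)) \<psi>"
    using fin_satE[OF fs ps] fv\<psi> by metis
  moreover have "set (ys @ ps) \<subseteq> univ C"
    using ys(2) ps univ by auto
  ultimately have "sat C (lenv (map ((!) ys) I @ ps)) \<phi>"
    using \<psi>[OF _ _ picks[OF ys(1)]] by simp
  moreover have "set (map ((!) ys) I) \<subseteq> M"
    using ys I by (auto intro!: subsetD[OF ys(2)])
  ultimately show "\<exists>ys. length ys = length (map ((!) xs) I) \<and> set ys \<subseteq> M \<and>
      sat C (lenv (ys @ ps)) \<phi>"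
    by (intro exI[of _ "map ((!) ys) I"]) simp
qed

lemma fin_sat_member:
  assumes "fin_sat C M xs B" and "x \<in> set xs"
    and "set xs \<subseteq> univ C" "B \<subseteq> univ C" "M \<subseteq> univ C"
  shows "fin_sat C M [x] B"
proof -
  obtain k where "k < length xs" "xs ! k = x"
    using assms(2) by (auto simp: in_set_conv_nth)
  then show ?thesis
    using fin_sat_map_nth[OF assms(1) _ assms(3-5), of "[k]"] by simp
qed

lemma fin_sat_snoc:
  assumes fs: "fin_sat C M xs (B \<union> {c})" and fsc: "fin_sat C M [c] B"
    and MB: "M \<subseteq> B" and univ: "B \<subseteq> univ C" "c \<in> univ C"
  shows "fin_sat C M (xs @ [c]) B"
proof (rule fin_satI)
  fix \<phi> ps
  assume ps: "set ps \<subseteq> B" and fv: "fv \<phi> \<subseteq> {..<length (xs @ [c]) + length ps}"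
    and sat: "sat C (lenv ((xs @ [c]) @ ps)) \<phi>"
  obtain ys where ys: "length ys = length xs" "set ys \<subseteq> M" "sat C (lenv (ys @ c # ps)) \<phi>"
    by (rule fin_satE[OF fs, of "c # ps" \<phi>]) (use ps fv sat in auto)
  let ?n = "length ys" and ?k = "length ps"
  let ?J = "[1..<1 + ?n] @ [0] @ [1 + ?n..<1 + ?n + ?k]"
  have picks: "map ((!) (z # ys @ ps)) ?J = ys @ z # ps" for z
    using map_nth_block[of "[z]" ys ps] map_nth_block[of "z # ys" ps "[]"] by simp
  obtain \<psi> where fv\<psi>: "fv \<psi> \<subseteq> {..<1 + (?n + ?k)}"
    and \<psi>: "\<And>L L'. length L = 1 + (?n + ?k) \<Longrightarrow> set L \<subseteq> univ C \<Longrightarrow>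
           map ((!) L) ?J = L' \<Longrightarrow> sat C (lenv L) \<psi> \<longleftrightarrow> sat C (lenv L') \<phi>"
    by (rule definable_reindex[of \<phi> ?J "1 + (?n + ?k)" C]) (use fv ys(1) in auto)
  have ysU: "set ys \<subseteq> univ C" "set ps \<subseteq> univ C"
    using ys(2) ps MB univ by auto
  have c_sat: "sat C (lenv ([c] @ ys @ ps)) \<psi>"
    using \<psi>[OF _ _ picks] ys(3) ysU univ(2) by simp
  have params: "set (ys @ ps) \<subseteq> B"
    using ys(2) ps MB by auto
  have "fv \<psi> \<subseteq> {..<length [c] + length (ys @ ps)}"
    using fv\<psi> by simp
  then obtain zs where zs: "length zs = length [c]" "set zs \<subseteq> M" "sat C (lenv (zs @ ys @ ps)) \<psi>"
    using fin_satE[OF fsc params _ c_sat] by blast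
  then obtain m where m: "zs = [m]" "m \<in> M"
    by (cases zs) auto
  then have "sat C (lenv (ys @ m # ps)) \<phi>"
    using \<psi>[OF _ _ picks] zs(3) ysU MB univ(1) by auto
  then show "\<exists>ws. length ws = length (xs @ [c]) \<and> set ws \<subseteq> M \<and> sat C (lenv (ws @ ps)) \<phi>"
    using ys m by (intro exI[of _ "ys @ [m]"]) auto
qed

lemma realizes_sat:
  assumes real: "realizes C qs (tp C ps M)" and len: "length qs = length ps"
    and ms: "set ms \<subseteq> M" and fv: "fv \<chi> \<subseteq> {..<length ms + length ps}"
    and univ: "set ms \<subseteq> univ C" "set ps \<subseteq> univ C" "set qs \<subseteq> univ C"
    and sat: "sat C (lenv (ms @ ps)) \<chi>"
  shows "sat C (lenv (ms @ qs)) \<chi>"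
proof -
  let ?k = "length ps" and ?r = "length ms"
  let ?I = "[?k..<?k + ?r] @ [0..<?k]"
  have picks: "map ((!) (ys @ ms)) ?I = ms @ ys" if "length ys = ?k" for ys
    using that map_nth_block[of ys ms "[]"] map_nth_block[of "[]" ys ms] by simp
  obtain \<theta> where fv\<theta>: "fv \<theta> \<subseteq> {..<?k + ?r}"
    and \<theta>: "\<And>L L'. length L = ?k + ?r \<Longrightarrow> set L \<subseteq> univ C \<Longrightarrow>
           map ((!) L) ?I = L' \<Longrightarrow> sat C (lenv L) \<theta> \<longleftrightarrow> sat C (lenv L') \<chi>"
    by (rule definable_reindex[of \<chi> ?I "?k + ?r" C]) (use fv in auto)
  have "sat C (lenv (ps @ ms)) \<theta>"
    using \<theta>[OF _ _ picks[OF refl]] sat univ(1,2) by simp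
  then have "(\<theta>, ms) \<in> tp C ps M"
    using fv\<theta> ms by (simp add: mem_tp)
  then have "sat C (lenv (qs @ ms)) \<theta>"
    using real unfolding realizes_def by auto
  then show ?thesis
    using \<theta>[OF _ _ picks[OF len]] len univ(1,3) by simp
qed

(* A formula in xs over M telling ps from qs would be satisfied by a tuple from M, which
   would then tell ps from qs over M. *)
lemma fin_sat_realization_swap:
  assumes fs: "fin_sat C M xs (M \<union> set ps \<union> set qs)"
    and real: "realizes C qs (tp C ps M)" and len: "length qs = length ps"
    and R: "set R \<subseteq> M" and fv: "fv \<chi> \<subseteq> {..<length R + length xs + length ps}"
    and univ: "set xs \<subseteq> univ C" "set ps \<subseteq> univ C" "set qs \<subseteq> univ C" "M \<subseteq> univ C"
    and sat: "sat C (lenv (R @ xs @ ps)) \<chi>"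
  shows "sat C (lenv (R @ xs @ qs)) \<chi>"
proof (rule ccontr)
  assume nsat: "\<not> sat C (lenv (R @ xs @ qs)) \<chi>"
  let ?r = "length R" and ?n = "length xs" and ?k = "length ps"
  let ?m = "?n + (?r + ?k + ?k)"
  let ?J = "\<lambda>j. [?n..<?n + ?r] @ [0..<?n] @ [j..<j + ?k]"
  have picks: "map ((!) (zs @ R @ ps @ qs)) (?J (?n + ?r)) = R @ zs @ ps"
    "map ((!) (zs @ R @ ps @ qs)) (?J (?n + ?r + ?k)) = R @ zs @ qs"
    if "length zs = ?n" for zs
    using that len map_nth_block[of zs R "ps @ qs"] map_nth_block[of "[]" zs "R @ ps @ qs"]
      map_nth_block[of "zs @ R" ps qs] map_nth_block[of "zs @ R @ ps" qs "[]"]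
    by (simp_all add: add.assoc)
  have J1: "fv \<chi> \<subseteq> {..<length (?J (?n + ?r))}" "set (?J (?n + ?r)) \<subseteq> {..<?m}"
    using fv by auto
  have J2: "fv \<chi> \<subseteq> {..<length (?J (?n + ?r + ?k))}" "set (?J (?n + ?r + ?k)) \<subseteq> {..<?m}"
    using fv by auto
  obtain \<psi>1 where fv1: "fv \<psi>1 \<subseteq> {..<?m}"
    and \<psi>1: "\<And>L L'. length L = ?m \<Longrightarrow> set L \<subseteq> univ C \<Longrightarrow>
           map ((!) L) (?J (?n + ?r)) = L' \<Longrightarrow> sat C (lenv L) \<psi>1 \<longleftrightarrow> sat C (lenv L') \<chi>"
    by (rule definable_reindex[OF J1, where S = C]) blast
  obtain \<psi>2 where fv2: "fv \<psi>2 \<subseteq> {..<?m}"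
    and \<psi>2: "\<And>L L'. length L = ?m \<Longrightarrow> set L \<subseteq> univ C \<Longrightarrow>
           map ((!) L) (?J (?n + ?r + ?k)) = L' \<Longrightarrow> sat C (lenv L) \<psi>2 \<longleftrightarrow> sat C (lenv L') \<chi>"
    by (rule definable_reindex[OF J2, where S = C]) blast
  define \<Phi> where "\<Phi> = Conj \<psi>1 (Neg \<psi>2)"
  have sat\<Phi>: "sat C (lenv (zs @ R @ ps @ qs)) \<Phi> \<longleftrightarrow>
      sat C (lenv (R @ zs @ ps)) \<chi> \<and> \<not> sat C (lenv (R @ zs @ qs)) \<chi>"
    if "length zs = ?n" "set zs \<subseteq> univ C" for zs
    using \<psi>1[OF _ _ picks(1)] \<psi>2[OF _ _ picks(2)] that len R univ by (auto simp: \<Phi>_def)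
  have "set (R @ ps @ qs) \<subseteq> M \<union> set ps \<union> set qs"
    using R by auto
  moreover have "fv \<Phi> \<subseteq> {..<length xs + length (R @ ps @ qs)}"
    using fv1 fv2 len by (auto simp: \<Phi>_def)
  moreover have "sat C (lenv (xs @ R @ ps @ qs)) \<Phi>"
    using sat\<Phi>[of xs] sat nsat univ(1) by simp
  ultimately obtain zs where zs: "length zs = ?n" "set zs \<subseteq> M"
      "sat C (lenv (zs @ R @ ps @ qs)) \<Phi>"
    by (rule fin_satE[OF fs])
  have zsU: "set (R @ zs) \<subseteq> univ C"
    using R zs(2) univ(4) by auto
  have "sat C (lenv ((R @ zs) @ ps)) \<chi>" and "\<not> sat C (lenv ((R @ zs) @ qs)) \<chi>"
    using sat\<Phi>[of zs] zs zsU by auto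
  then show False
    using realizes_sat[OF real len _ _ zsU univ(2,3)] zs(1,2) R fv by auto
qed

lemma fin_sat_realization_swap_iff:
  assumes "fin_sat C M xs (M \<union> set ps \<union> set qs)"
    and "realizes C qs (tp C ps M)" and "length qs = length ps"
    and "set R \<subseteq> M" and "fv \<chi> \<subseteq> {..<length R + length xs + length ps}"
    and "set xs \<subseteq> univ C" "set ps \<subseteq> univ C" "set qs \<subseteq> univ C" "M \<subseteq> univ C"
  shows "sat C (lenv (R @ xs @ ps)) \<chi> \<longleftrightarrow> sat C (lenv (R @ xs @ qs)) \<chi>"
  using fin_sat_realization_swap[OF assms] fin_sat_realization_swap[OF assms(1-4), of "Neg \<chi>"]
    assms(5-9) by auto

lemma definable_abstract_param:
  assumes fv: "fv \<theta> \<subseteq> {..<n + length ps}"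
  obtains \<theta>' where "fv \<theta>' \<subseteq> {..<n + 1 + length ps}"
    and "\<And>zs. length zs = n \<Longrightarrow> set (zs @ b # map (\<lambda>p. if p = b then d else p) ps) \<subseteq> univ S \<Longrightarrow>
           sat S (lenv (zs @ b # map (\<lambda>p. if p = b then d else p) ps)) \<theta>' \<longleftrightarrow>
           sat S (lenv (zs @ ps)) \<theta>"
proof -
  let ?ps' = "map (\<lambda>p. if p = b then d else p) ps"
  let ?J = "[0..<n] @ map (\<lambda>j. if ps ! j = b then n else Suc n + j) [0..<length ps]"
  have picks: "map ((!) (zs @ b # ?ps')) ?J = zs @ ps" if "length zs = n" for zs
    by (rule nth_equalityI) (use that in \<open>auto simp: nth_append\<close>)
  show ?thesis
    by (rule definable_reindex[of \<theta> ?J "n + 1 + length ps" S]) (use fv picks that in auto)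
qed

lemma tp_in_Stypes: "set ps \<subseteq> univ C \<Longrightarrow> tp C ps M \<in> Stypes C (length ps) M"
  unfolding Stypes_def fs_partial_type_def realizes_def by (auto simp: tp_def lformulas_def)

lemma small_modelD:
  assumes "small_model C K M"
  shows "M \<noteq> {}" and "M \<subseteq> univ C"
  using assms by (auto simp: small_model_def elem_sub_def)

lemma fs_dichotomyD:
  assumes "fs_dichotomy C K" and "small_model C K M"
    and "set P \<subseteq> univ C" "set xs \<subseteq> univ C" "c \<in> univ C"
    and "fin_sat C M xs (M \<union> set P)"
  shows "fin_sat C M xs (M \<union> set P \<union> {c}) \<or> fin_sat C M (xs @ [c]) (M \<union> set P)"
  using assms unfolding fs_dichotomy_def by blast

lemma fin_sat_of_elements:
  assumes dich: "fs_dichotomy C K" and sm: "small_model C K M"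
    and P: "set P \<subseteq> univ C" and xs: "set xs \<subseteq> univ C"
    and elements: "\<forall>x\<in>set xs. fin_sat C M [x] (M \<union> set P)"
  shows "fin_sat C M xs (M \<union> set P)"
  using xs elements
proof (induction xs rule: rev_induct)
  case Nil
  show ?case by (rule fin_sat_Nil)
next
  case (snoc x xs)
  then have IH: "fin_sat C M xs (M \<union> set P)" and x: "x \<in> univ C" "fin_sat C M [x] (M \<union> set P)"
    by auto
  have MP: "M \<union> set P \<subseteq> univ C"
    using small_modelD(2)[OF sm] P by auto
  consider "fin_sat C M xs (M \<union> set P \<union> {x})" | "fin_sat C M (xs @ [x]) (M \<union> set P)"
    using fs_dichotomyD[OF dich sm P _ x(1) IH] snoc.prems(1) by auto
  then show ?case
    by cases (use fin_sat_snoc[OF _ x(2) _ MP x(1)] in auto)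
qed

lemma fin_sat_iff_elements:
  assumes dich: "fs_dichotomy C K" and sm: "small_model C K M"
    and B: "M \<subseteq> B" "B \<subseteq> univ C" and xs: "set xs \<subseteq> univ C"
  shows "fin_sat C M xs B \<longleftrightarrow> (\<forall>x\<in>set xs. fin_sat C M [x] B)"
proof
  show "\<forall>x\<in>set xs. fin_sat C M [x] B" if "fin_sat C M xs B"
    using fin_sat_member[OF that _ xs B(2) small_modelD(2)[OF sm]] by blast
next
  assume elements: "\<forall>x\<in>set xs. fin_sat C M [x] B"
  show "fin_sat C M xs B"
  proof (rule fin_sat_if_finite_params)
    fix ps
    assume ps: "set ps \<subseteq> B"
    then have "\<forall>x\<in>set xs. fin_sat C M [x] (M \<union> set ps)"
      using elements fin_sat_mono[of C M _ B "M \<union> set ps"] ps B(1) by blast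
    then have "fin_sat C M xs (M \<union> set ps)"
      using fin_sat_of_elements[OF dich sm _ xs] ps B(2) by blast
    then show "fin_sat C M xs (set ps)"
      by (rule fin_sat_mono) auto
  qed
qed

lemma fin_sat_realization_transfer:
  assumes join: "fin_sat C M (xs @ [b]) (M \<union> set ps \<union> set qs)"
    and real: "realizes C qs (tp C ps M)" and len: "length qs = length ps" and qs: "set qs \<subseteq> D"
    and fsb: "fin_sat C M xs (D \<union> {b})"
    and fv: "fv \<theta> \<subseteq> {..<length xs + 1 + length ps}"
    and univ: "set xs \<subseteq> univ C" "b \<in> univ C" "set ps \<subseteq> univ C" "M \<subseteq> univ C" "D \<subseteq> univ C"
    and sat: "sat C (lenv (xs @ b # ps)) \<theta>"
  obtains ms where "length ms = length xs" "set ms \<subseteq> M" "sat C (lenv (ms @ b # ps)) \<theta>"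
proof -
  have qsU: "set qs \<subseteq> univ C"
    using qs univ(5) by auto
  have xbU: "set (xs @ [b]) \<subseteq> univ C"
    using univ(1,2) by auto
  have "sat C (lenv ([] @ (xs @ [b]) @ qs)) \<theta>"
    using fin_sat_realization_swap[OF join real len _ _ xbU univ(3) qsU univ(4), where R = "[]"] fv sat
    by simp
  then obtain ms where ms: "length ms = length xs" "set ms \<subseteq> M" "sat C (lenv (ms @ b # qs)) \<theta>"
    using fin_satE[OF fsb, of "b # qs" \<theta>] qs fv len by auto
  have "fin_sat C M [b] (M \<union> set ps \<union> set qs)"
    by (rule fin_sat_member[OF join]) (use xbU univ(3,4) qsU in auto)
  then have "sat C (lenv (ms @ [b] @ ps)) \<theta> \<longleftrightarrow> sat C (lenv (ms @ [b] @ qs)) \<theta>"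
    by (rule fin_sat_realization_swap_iff[OF _ real len ms(2)]) (use fv ms(1) univ qsU in auto)
  then show ?thesis
    using that ms by auto
qed

lemma fin_sat_full_insert:
  assumes dich: "fs_dichotomy C K" and sm: "small_model C K M" and full: "full C M D"
    and xs: "set xs \<subseteq> univ C" and B: "B \<subseteq> univ C" and b: "b \<in> univ C"
    and fsB: "fin_sat C M xs (D \<union> B)" and fsb: "fin_sat C M xs (D \<union> {b})"
  shows "fin_sat C M xs (D \<union> insert b B)"
proof (rule fin_satI, rule ccontr)
  fix \<theta> ps
  assume ps: "set ps \<subseteq> D \<union> insert b B" and fv: "fv \<theta> \<subseteq> {..<length xs + length ps}"
    and sat: "sat C (lenv (xs @ ps)) \<theta>"
    and none: "\<nexists>ys. length ys = length xs \<and> set ys \<subseteq> M \<and> sat C (lenv (ys @ ps)) \<theta>"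
  have MD: "M \<subseteq> D" "D \<subseteq> univ C"
    using full by (auto simp: full_def)
  obtain d where d: "d \<in> M"
    using small_modelD(1)[OF sm] by auto
  define ps' where "ps' = map (\<lambda>p. if p = b then d else p) ps"
  have ps': "length ps' = length ps" "set ps' \<subseteq> D \<union> B" "set ps' \<subseteq> univ C"
    using ps d MD B by (auto simp: ps'_def)
  obtain \<theta>' where fv': "fv \<theta>' \<subseteq> {..<length xs + 1 + length ps}"
    and \<theta>': "\<And>zs. length zs = length xs \<Longrightarrow> set (zs @ b # ps') \<subseteq> univ C \<Longrightarrow>
           sat C (lenv (zs @ b # ps')) \<theta>' \<longleftrightarrow> sat C (lenv (zs @ ps)) \<theta>"
    unfolding ps'_def by (rule definable_abstract_param[OF fv, where b = b and d = d and S = C]) blast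
  obtain qs where qs: "length qs = length ps'" "set qs \<subseteq> D" "realizes C qs (tp C ps' M)"
    using full tp_in_Stypes[OF ps'(3)] unfolding full_def by blast
  have univ: "set qs \<subseteq> univ C" "M \<subseteq> univ C"
    using qs(2) MD by auto
  have "fin_sat C M xs (M \<union> set (ps' @ qs))"
    by (rule fin_sat_mono[OF fsB]) (use ps' qs MD in auto)
  moreover have "set (ps' @ qs) \<subseteq> univ C"
    using ps'(3) univ by auto
  ultimately consider (extend) "fin_sat C M xs (M \<union> set (ps' @ qs) \<union> {b})"
    | (join) "fin_sat C M (xs @ [b]) (M \<union> set (ps' @ qs))"
    using fs_dichotomyD[OF dich sm _ xs b] by blast
  then show False
  proof cases
    case extend
    have "set ps \<subseteq> M \<union> set (ps' @ qs) \<union> {b}"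
      by (auto simp: ps'_def)
    then show False
      using fin_satE[OF extend _ fv sat] none by blast
  next
    case join
    have "sat C (lenv (xs @ b # ps')) \<theta>'"
      using \<theta>'[of xs] sat xs b ps'(3) by simp
    then obtain ms where ms: "length ms = length xs" "set ms \<subseteq> M" "sat C (lenv (ms @ b # ps')) \<theta>'"
      using fin_sat_realization_transfer[OF _ qs(3,1,2) fsb _ xs b ps'(3) univ(2) MD(2)] join fv' ps'(1)
      by (auto simp: Un_assoc)
    then have "sat C (lenv (ms @ ps)) \<theta>"
      using \<theta>'[OF ms(1)] univ b ps'(3) by auto
    then show False
      using none ms(1,2) by blast
  qed
qed

lemma fin_sat_full_union:
  assumes dich: "fs_dichotomy C K" and sm: "small_model C K M" and full: "full C M D"
    and xs: "set xs \<subseteq> univ C"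
    and B: "finite B" "B \<noteq> {}" "B \<subseteq> univ C"
    and each: "\<forall>b\<in>B. fin_sat C M xs (D \<union> {b})"
  shows "fin_sat C M xs (D \<union> B)"
  using B each
proof (induction B rule: finite_ne_induct)
  case (singleton b)
  then show ?case by simp
next
  case (insert b B)
  then show ?case
    using fin_sat_full_insert[OF dich sm full xs, of B b] by simp
qed

lemma not_fin_sat_through:
  assumes dich: "fs_dichotomy C K" and sm: "small_model C K M"
    and xs: "set xs \<subseteq> univ C" and P: "set P \<subseteq> univ C" and c: "c \<in> univ C"
    and not_xs: "\<not> fin_sat C M xs (M \<union> {c})" and not_c: "\<not> fin_sat C M [c] (M \<union> set P)"
  shows "\<not> fin_sat C M xs (M \<union> set P)"
proof
  assume "fin_sat C M xs (M \<union> set P)"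
  then consider "fin_sat C M xs (M \<union> set P \<union> {c})" | "fin_sat C M (xs @ [c]) (M \<union> set P)"
    using fs_dichotomyD[OF dich sm P xs c] by blast
  then show False
  proof cases
    case 1
    then have "fin_sat C M xs (M \<union> {c})"
      by (rule fin_sat_mono) auto
    then show False using not_xs by blast
  next
    case 2
    then have "fin_sat C M [c] (M \<union> set P)"
      by (rule fin_sat_member) (use xs P c small_modelD(2)[OF sm] in auto)
    then show False using not_c by blast
  qed
qed

lemma fin_sat_full_iff_pairs:
  assumes dich: "fs_dichotomy C K" and sm: "small_model C K M" and full: "full C M D"
    and xs: "set xs \<subseteq> univ C" and ys: "set ys \<subseteq> univ C" "ys \<noteq> []"
  shows "fin_sat C M xs (D \<union> set ys) \<longleftrightarrow> (\<forall>x\<in>set xs. \<forall>y\<in>set ys. fin_sat C M [x] (D \<union> {y}))"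
proof -
  have MD: "M \<subseteq> D" "D \<subseteq> univ C"
    using full by (auto simp: full_def)
  have singles: "fin_sat C M xs (D \<union> {y}) \<longleftrightarrow> (\<forall>x\<in>set xs. fin_sat C M [x] (D \<union> {y}))"
    if "y \<in> set ys" for y
    by (rule fin_sat_iff_elements[OF dich sm]) (use that xs ys MD in auto)
  have "fin_sat C M xs (D \<union> set ys) \<longleftrightarrow> (\<forall>y\<in>set ys. fin_sat C M xs (D \<union> {y}))"
  proof
    assume fs: "fin_sat C M xs (D \<union> set ys)"
    show "\<forall>y\<in>set ys. fin_sat C M xs (D \<union> {y})"
    proof
      fix y
      assume "y \<in> set ys"
      then show "fin_sat C M xs (D \<union> {y})"
        by (intro fin_sat_mono[OF fs]) auto
    qed
  next
    assume "\<forall>y\<in>set ys. fin_sat C M xs (D \<union> {y})"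
    then show "fin_sat C M xs (D \<union> set ys)"
      using fin_sat_full_union[OF dich sm full xs List.finite_set _ ys(1)] ys(2) by simp
  qed
  also have "\<dots> \<longleftrightarrow> (\<forall>y\<in>set ys. \<forall>x\<in>set xs. fin_sat C M [x] (D \<union> {y}))"
    using singles by (rule ball_cong[OF refl])
  finally show ?thesis
    by blast
qed

theorem lemma3:
  fixes C :: "('a, 'f, 'r) struc" and K :: "'k set"
    and M :: "'a set" and as bs :: "'a list" and c :: 'a
  assumes "monster C K"
    and "fs_dichotomy C K"
    and "small_model C K M"
    and "set as \<subseteq> univ C" and "set bs \<subseteq> univ C" and "c \<in> univ C"
  shows "(\<not> fin_sat C M as (M \<union> {c}) \<and> \<not> fin_sat C M [c] (M \<union> set bs)
            \<longrightarrow> \<not> fin_sat C M as (M \<union> set bs))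
       \<and> (fin_sat C M as (M \<union> set bs) \<longleftrightarrow> (\<forall>a\<in>set as. fin_sat C M [a] (M \<union> set bs)))
       \<and> (\<forall>D. full C M D \<longrightarrow> bs \<noteq> [] \<longrightarrow>
            (fin_sat C M as (D \<union> set bs) \<longleftrightarrow>
             (\<forall>a\<in>set as. \<forall>b\<in>set bs. fin_sat C M [a] (D \<union> {b}))))"
proof (intro conjI impI allI)
  note dich = assms(2) and sm = assms(3)
  show "\<not> fin_sat C M as (M \<union> set bs)"
    if "\<not> fin_sat C M as (M \<union> {c}) \<and> \<not> fin_sat C M [c] (M \<union> set bs)"
    using not_fin_sat_through[OF dich sm assms(4-6)] that by blast
  show "fin_sat C M as (M \<union> set bs) \<longleftrightarrow> (\<forall>a\<in>set as. fin_sat C M [a] (M \<union> set bs))"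
    by (rule fin_sat_iff_elements[OF dich sm]) (use assms(4,5) small_modelD(2)[OF sm] in auto)
  show "fin_sat C M as (D \<union> set bs) \<longleftrightarrow> (\<forall>a\<in>set as. \<forall>b\<in>set bs. fin_sat C M [a] (D \<union> {b}))"
    if "full C M D" and "bs \<noteq> []" for D
    by (rule fin_sat_full_iff_pairs[OF dich sm that(1) assms(4,5) that(2)])
qed

end
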